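(* Let $V$ be finite, $\omega:V\to\mathbb{R}_{>0}$, $W:=\sum_{i\in V}\omega_i$, and vectors $\{v_i\}_{i\in V}$ with $\sum_{\{i,j\}\subseteq V,i\ne j}\omega_i\omega_j\|v_i-v_j\|^2=1$. Suppose $i_0\in V$ and let $L:=\{j\in V:\|v_{i_0}-v_j\|^2\le\frac{1}{8W^2}\}$ (nonempty as $i_0\in L$). For $j\in V$ let $\Delta(j,L):=\min_{i\in L}\|v_i-v_j\|^2$. Then $\sum_{j\in V\setminus L}\omega_j\Delta(j,L)\ge\frac{1}{8W}$. *)

theory Defs
  imports "HOL-Analysis.Analysis"
begin

definition Delta :: "('i \<Rightarrow> 'a::real_normed_vector) \<Rightarrow> 'i \<Rightarrow> 'i set \<Rightarrow> real" where
  "Delta v j L = Min ((\<lambda>i. (norm (v i - v j))\<^sup>2) ` L)"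

end

theory Submission
  imports Defs
begin

text \<open>
  Write \<open>D j = \<parallel>v j - v i0\<parallel>\<^sup>2\<close> and \<open>r = 1/(8W\<^sup>2)\<close>. The weighted sum of squared pairwise
  distances is at most \<open>2W \<Sum>\<^sub>j \<omega>\<^sub>j D j\<close> (it is minimised by centring at the weighted mean,
  not at \<open>v i0\<close>), so \<open>\<Sum>\<^sub>j \<omega>\<^sub>j D j \<ge> 1/W\<close>, while the points of \<open>L\<close> contribute at most
  \<open>rW = 1/(8W)\<close>. For \<open>j \<notin> L\<close> the inequality \<open>\<parallel>a + b\<parallel>\<^sup>2 \<le> 2\<parallel>a\<parallel>\<^sup>2 + 2\<parallel>b\<parallel>\<^sup>2\<close> gives
  \<open>\<Delta>(j,L) \<ge> D j / 2 - r\<close>, and summing yields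
  \<open>(1/W - 1/(8W))/2 - 1/(8W) = 5/(16W) \<ge> 1/(8W)\<close>.
\<close>

lemma power2_norm_add_le:
  fixes a b :: "'a::real_normed_vector"
  shows "(norm (a + b))\<^sup>2 \<le> 2 * (norm a)\<^sup>2 + 2 * (norm b)\<^sup>2"
proof -
  have "(norm (a + b))\<^sup>2 \<le> (norm a + norm b)\<^sup>2"
    by (simp add: power_mono norm_triangle_ineq)
  also have "\<dots> \<le> 2 * (norm a)\<^sup>2 + 2 * (norm b)\<^sup>2"
    using sum_squares_ge_zero[of "norm a - norm b" 0] by (simp add: power2_eq_square algebra_simps)
  finally show ?thesis .
qed

lemma weighted_sum_pairs_power2_dist_eq:
  fixes x :: "'i \<Rightarrow> 'a::real_inner"
  shows "(\<Sum>i\<in>V. \<Sum>j\<in>V. \<omega> i * \<omega> j * (norm (x i - x j))\<^sup>2)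
    = 2 * (\<Sum>i\<in>V. \<omega> i) * (\<Sum>j\<in>V. \<omega> j * (norm (x j))\<^sup>2)
      - 2 * (norm (\<Sum>j\<in>V. \<omega> j *\<^sub>R x j))\<^sup>2"
proof -
  have expand: "\<omega> i * \<omega> j * (norm (x i - x j))\<^sup>2 =
     \<omega> j * (\<omega> i * (norm (x i))\<^sup>2) + \<omega> i * (\<omega> j * (norm (x j))\<^sup>2)
     - 2 * ((\<omega> i *\<^sub>R x i) \<bullet> (\<omega> j *\<^sub>R x j))" for i j
    by (simp add: power2_norm_eq_inner inner_diff_left inner_diff_right inner_commute algebra_simps)
  have "(\<Sum>i\<in>V. \<Sum>j\<in>V. \<omega> i * \<omega> j * (norm (x i - x j))\<^sup>2)
     = (\<Sum>i\<in>V. \<Sum>j\<in>V. \<omega> j * (\<omega> i * (norm (x i))\<^sup>2))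
       + (\<Sum>i\<in>V. \<Sum>j\<in>V. \<omega> i * (\<omega> j * (norm (x j))\<^sup>2))
       - 2 * (\<Sum>i\<in>V. \<Sum>j\<in>V. (\<omega> i *\<^sub>R x i) \<bullet> (\<omega> j *\<^sub>R x j))"
    by (simp only: expand sum_subtractf sum.distrib sum_distrib_left)
  also have "(\<Sum>i\<in>V. \<Sum>j\<in>V. (\<omega> i *\<^sub>R x i) \<bullet> (\<omega> j *\<^sub>R x j)) = (norm (\<Sum>j\<in>V. \<omega> j *\<^sub>R x j))\<^sup>2"
    by (simp add: power2_norm_eq_inner inner_sum_left inner_sum_right sum_distrib_left)
       (subst sum.swap, simp add: sum_distrib_left)
  also have "(\<Sum>i\<in>V. \<Sum>j\<in>V. \<omega> j * (\<omega> i * (norm (x i))\<^sup>2))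
      = (\<Sum>i\<in>V. \<omega> i) * (\<Sum>j\<in>V. \<omega> j * (norm (x j))\<^sup>2)"
    by (simp add: sum_distrib_left sum_distrib_right mult.commute)
  also have "(\<Sum>i\<in>V. \<Sum>j\<in>V. \<omega> i * (\<omega> j * (norm (x j))\<^sup>2))
      = (\<Sum>i\<in>V. \<omega> i) * (\<Sum>j\<in>V. \<omega> j * (norm (x j))\<^sup>2)"
    by (simp add: sum_distrib_left[symmetric] sum_distrib_right[symmetric])
  finally show ?thesis by linarith
qed

lemma weighted_sum_pairs_power2_dist_le:
  fixes x :: "'i \<Rightarrow> 'a::real_inner"
  shows "(\<Sum>i\<in>V. \<Sum>j\<in>V. \<omega> i * \<omega> j * (norm (x i - x j))\<^sup>2)
    \<le> 2 * (\<Sum>i\<in>V. \<omega> i) * (\<Sum>j\<in>V. \<omega> j * (norm (x j - c))\<^sup>2)"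
  using weighted_sum_pairs_power2_dist_eq[of \<omega> "\<lambda>j. x j - c" V]
  by (simp add: zero_le_power2)

lemma sum_offdiagonal_eq_sum:
  assumes "finite V" and "\<And>i. f i i = 0"
  shows "(\<Sum>i\<in>V. \<Sum>j\<in>V - {i}. f i j) = (\<Sum>i\<in>V. \<Sum>j\<in>V. f i j)"
proof (rule sum.cong[OF refl])
  fix i assume "i \<in> V"
  then show "(\<Sum>j\<in>V - {i}. f i j) = (\<Sum>j\<in>V. f i j)"
    using sum.remove[OF assms(1) \<open>i \<in> V\<close>, of "f i"] assms(2) by simp
qed

lemma Delta_ge_half_power2_dist:
  assumes "finite L" and "L \<noteq> {}" and "\<And>i. i \<in> L \<Longrightarrow> (norm (v i - c))\<^sup>2 \<le> r"
  shows "(norm (v j - c))\<^sup>2 / 2 - r \<le> Delta v j L"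
  unfolding Delta_def
proof (intro Min.boundedI)
  fix a assume "a \<in> (\<lambda>i. (norm (v i - v j))\<^sup>2) ` L"
  then obtain i where "i \<in> L" and a: "a = (norm (v i - v j))\<^sup>2" by blast
  have "(norm (v j - c))\<^sup>2 \<le> 2 * (norm (v j - v i))\<^sup>2 + 2 * (norm (v i - c))\<^sup>2"
    using power2_norm_add_le[of "v j - v i" "v i - c"] by simp
  with assms(3)[OF \<open>i \<in> L\<close>] show "(norm (v j - c))\<^sup>2 / 2 - r \<le> a"
    by (simp add: a norm_minus_commute)
qed (use assms in auto)

lemma sum_weighted_Delta_ge:
  assumes "finite L" and "L \<noteq> {}" and "\<And>i. i \<in> L \<Longrightarrow> (norm (v i - c))\<^sup>2 \<le> r"
    and "\<And>j. j \<in> A \<Longrightarrow> \<omega> j \<ge> 0"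
  shows "(\<Sum>j\<in>A. \<omega> j * (norm (v j - c))\<^sup>2) / 2 - r * (\<Sum>j\<in>A. \<omega> j)
    \<le> (\<Sum>j\<in>A. \<omega> j * Delta v j L)"
proof -
  have "(\<Sum>j\<in>A. \<omega> j * (norm (v j - c))\<^sup>2) / 2 - r * (\<Sum>j\<in>A. \<omega> j)
      = (\<Sum>j\<in>A. \<omega> j * ((norm (v j - c))\<^sup>2 / 2 - r))"
    by (simp add: sum_subtractf sum_divide_distrib sum_distrib_left algebra_simps)
  also have "\<dots> \<le> (\<Sum>j\<in>A. \<omega> j * Delta v j L)"
    using Delta_ge_half_power2_dist[OF assms(1-3)] assms(4)
    by (intro sum_mono mult_left_mono) auto
  finally show ?thesis .
qed

lemma sum_diff_ge_sum_minus_bound: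
  fixes f :: "'i \<Rightarrow> real"
  assumes "finite V" and "L \<subseteq> V" and "\<And>j. j \<in> V \<Longrightarrow> \<omega> j \<ge> 0"
    and "\<And>j. j \<in> L \<Longrightarrow> f j \<le> r" and "r \<ge> 0"
  shows "(\<Sum>j\<in>V. \<omega> j * f j) - r * (\<Sum>j\<in>V. \<omega> j) \<le> (\<Sum>j\<in>V - L. \<omega> j * f j)"
proof -
  have "(\<Sum>j\<in>L. \<omega> j * f j) \<le> (\<Sum>j\<in>L. \<omega> j * r)"
    using assms(2-4) by (intro sum_mono mult_left_mono) auto
  also have "\<dots> \<le> (\<Sum>j\<in>V. \<omega> j * r)"
    using assms by (intro sum_mono2) auto
  finally show ?thesis
    using sum_diff[OF assms(1,2), of "\<lambda>j. \<omega> j * f j"] by (simp add: sum_distrib_left mult.commute)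
qed

theorem mainTheorem11:
  fixes V :: "'i set" and \<omega> :: "'i \<Rightarrow> real" and v :: "'i \<Rightarrow> 'a::euclidean_space"
    and W :: real and L :: "'i set" and i0 :: 'i
  assumes "finite V"
    and "\<forall>i\<in>V. \<omega> i > 0"
    and "W = (\<Sum>i\<in>V. \<omega> i)"
    and "(1/2) * (\<Sum>i\<in>V. \<Sum>j\<in>V - {i}. \<omega> i * \<omega> j * (norm (v i - v j))\<^sup>2) = 1"
    and "i0 \<in> V"
    and "L = {j\<in>V. (norm (v i0 - v j))\<^sup>2 \<le> 1 / (8 * W\<^sup>2)}"
  shows "(\<Sum>j\<in>V - L. \<omega> j * Delta v j L) \<ge> 1 / (8 * W)"
proof -
  define r where "r = 1 / (8 * W\<^sup>2)"
  define D where "D j = (norm (v j - v i0))\<^sup>2" for j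
  have W: "W > 0"
    using assms(1-3,5) sum_pos by blast
  have LV: "L \<subseteq> V" and "i0 \<in> L" and D_L: "\<And>i. i \<in> L \<Longrightarrow> D i \<le> r"
    using assms(5,6) W by (auto simp: D_def r_def norm_minus_commute)
  have "2 = (\<Sum>i\<in>V. \<Sum>j\<in>V. \<omega> i * \<omega> j * (norm (v i - v j))\<^sup>2)"
    using assms(4) sum_offdiagonal_eq_sum[OF assms(1), of "\<lambda>i j. \<omega> i * \<omega> j * (norm (v i - v j))\<^sup>2"]
    by simp
  also have "\<dots> \<le> 2 * W * (\<Sum>j\<in>V. \<omega> j * D j)"
    unfolding D_def assms(3) by (rule weighted_sum_pairs_power2_dist_le)
  finally have total: "1 / W \<le> (\<Sum>j\<in>V. \<omega> j * D j)"
    using W by (simp add: divide_le_eq mult.commute)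
  have outside: "1 / W - r * W \<le> (\<Sum>j\<in>V - L. \<omega> j * D j)"
    using sum_diff_ge_sum_minus_bound[OF assms(1) LV, of \<omega> D r] total D_L assms(2)
    by (simp add: assms(3) r_def less_imp_le)
  have "1 / (8 * W) \<le> (1 / W - r * W) / 2 - r * W"
    using W by (simp add: r_def power2_eq_square field_simps)
  also have "\<dots> \<le> (\<Sum>j\<in>V - L. \<omega> j * D j) / 2 - r * (\<Sum>j\<in>V - L. \<omega> j)"
  proof (intro diff_mono divide_right_mono)
    show "r * (\<Sum>j\<in>V - L. \<omega> j) \<le> r * W"
      using assms(1,2) by (intro mult_left_mono) (auto simp: assms(3) r_def less_imp_le intro!: sum_mono2)
  qed (use outside in simp_all)
  also have "\<dots> \<le> (\<Sum>j\<in>V - L. \<omega> j * Delta v j L)"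
    unfolding D_def using \<open>i0 \<in> L\<close> D_L assms(1,2) LV
    by (intro sum_weighted_Delta_ge) (auto simp: D_def less_imp_le intro: finite_subset)
  finally show ?thesis .
qed

end
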